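(* Let $\mathcal{G}\subseteq C(\mathbb{R},\mathbb{R})$ be nonempty. The following conditions are equivalent: (1) $\mathcal{K}_\mathcal{G}\subseteq\{\mathrm{CL}(E):E\in\mathrm{CL}(\mathbb{R})\}$; (2) there exist $h_1,h_2\in C(\mathbb{R},\mathbb{R}^* )$ such that $\mathcal{G}=\{g\in C(\mathbb{R},\mathbb{R}):h_1\le g\le h_2\}$.
   Context: $\mathbb{R}^*=\mathbb{R}\cup\{-\infty,\infty\}$ with its usual order topology; $C(\mathbb{R},\mathbb{R}^* )$ is the set of continuous functions $\mathbb{R}\to\mathbb{R}^*$, and $h\le g$ means $h(x)\le g(x)$ for all $x\in\mathbb{R}$. For a closed set $E\subseteq\mathbb{R}$, $\mathrm{CL}(E)$ denotes the family of all closed subsets of $E$. For $\mathcal{G}\subseteq C(\mathbb{R},\mathbb{R})$ let $R_\mathcal{G}=\{(f,E)\in C(\mathbb{R},\mathbb{R})\times\mathrm{CL}(\mathbb{R}):(\exists g\in\mathcal{G})\, f\restriction E=g\restriction E\}$; for $\mathcal{F}\subseteq C(\mathbb{R},\mathbb{R})$ put $E_\mathcal{G}(\mathcal{F})=\{E\in\mathrm{CL}(\mathbb{R}):(\forall f\in\mathcal{F})\,(f,E)\in R_\mathcal{G}\}$, and let $\mathcal{K}_\mathcal{G}=\{E_\mathcal{G}(\mathcal{F}):\mathcal{F}\subseteq C(\mathbb{R},\mathbb{R})\}$. *)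

theory Defs
  imports "HOL-Analysis.Analysis" "HOL-Library.Extended_Real"
begin

definition Creal :: "(real \<Rightarrow> real) set" where
  "Creal = {f. continuous_on UNIV f}"

definition CL :: "real set \<Rightarrow> real set set" where
  "CL E = {A. closed A \<and> A \<subseteq> E}"

definition RG :: "(real \<Rightarrow> real) set \<Rightarrow> ((real \<Rightarrow> real) \<times> real set) set" where
  "RG G = {(f, E). f \<in> Creal \<and> E \<in> CL UNIV \<and> (\<exists>g\<in>G. \<forall>x\<in>E. f x = g x)}"

definition EG :: "(real \<Rightarrow> real) set \<Rightarrow> (real \<Rightarrow> real) set \<Rightarrow> real set set" where
  "EG G F = {E \<in> CL UNIV. \<forall>f\<in>F. (f, E) \<in> RG G}"

definition KG :: "(real \<Rightarrow> real) set \<Rightarrow> real set set set" where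
  "KG G = {EG G F | F. F \<subseteq> Creal}"

end

(*
  (1) => (2): applied to a single function f, condition (1) says that the set of points where
  f takes a value of G is closed and that f agrees there with one member of G.  With f constant,
  and with f splicing two members of G together, the intermediate value theorem shows that the
  values of G at each point form an interval and that the pointwise supremum and infimum of G
  are continuous and attained wherever finite.  A continuous function squeezed between these two
  envelopes therefore takes a value of G at every point, hence is a member of G.

  (2) => (1): for a band G between h1 and h2, E_G(F) consists of the closed subsets of the closed
  set where every f in F lies between h1 and h2, because clamping f between h1 and h2 yields a
  member of G that agrees with f exactly there.
*)
theory Submission
  imports Defs
begin

definition values_at :: "(real \<Rightarrow> real) set \<Rightarrow> real \<Rightarrow> real set" where
  "values_at G x = (\<lambda>g. g x) ` G"

definition coincidence_set :: "(real \<Rightarrow> real) set \<Rightarrow> (real \<Rightarrow> real) \<Rightarrow> real set" where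
  "coincidence_set G f = {x. f x \<in> values_at G x}"

text \<open>What condition (1) asserts for the one-element families \<open>{f}\<close>.\<close>

definition realises_coincidences :: "(real \<Rightarrow> real) set \<Rightarrow> bool" where
  "realises_coincidences G \<longleftrightarrow>
     (\<forall>f\<in>Creal. closed (coincidence_set G f) \<and> (\<exists>g\<in>G. \<forall>x\<in>coincidence_set G f. f x = g x))"

definition upper_env :: "(real \<Rightarrow> real) set \<Rightarrow> real \<Rightarrow> ereal" where
  "upper_env G x = (SUP g\<in>G. ereal (g x))"

definition lower_env :: "(real \<Rightarrow> real) set \<Rightarrow> real \<Rightarrow> ereal" where
  "lower_env G x = (INF g\<in>G. ereal (g x))"

definition band :: "(real \<Rightarrow> ereal) \<Rightarrow> (real \<Rightarrow> ereal) \<Rightarrow> (real \<Rightarrow> real) set" where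
  "band h1 h2 = {g \<in> Creal. (\<forall>x. h1 x \<le> ereal (g x)) \<and> (\<forall>x. ereal (g x) \<le> h2 x)}"

lemma uminus_in_Creal: "f \<in> Creal \<Longrightarrow> (\<lambda>x. - f x) \<in> Creal"
  by (simp add: Creal_def continuous_on_minus)

lemma abs_ereal_between_neq_infinity:
  fixes z :: ereal
  assumes "ereal a \<le> z" "z \<le> ereal b"
  shows "\<bar>z\<bar> \<noteq> \<infinity>"
  using assms by (cases z) auto

lemma continuous_on_real_of_ereal_between:
  fixes h :: "real \<Rightarrow> ereal"
  assumes "continuous_on S h" "\<And>x. x \<in> S \<Longrightarrow> ereal (l x) \<le> h x" "\<And>x. x \<in> S \<Longrightarrow> h x \<le> ereal (u x)"
  shows "continuous_on S (\<lambda>x. real_of_ereal (h x))"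
proof -
  have "\<bar>h x\<bar> \<noteq> \<infinity>" if "x \<in> S" for x
    using assms(2,3)[OF that] by (rule abs_ereal_between_neq_infinity)
  with assms(1) show ?thesis using continuous_on_iff_real[of S h] by (simp add: o_def)
qed

subsection \<open>From condition (1) to the envelopes of \<open>G\<close>\<close>

lemma singleton_in_EG_iff:
  assumes "f \<in> Creal"
  shows "{x} \<in> EG G {f} \<longleftrightarrow> x \<in> coincidence_set G f"
  using assms by (auto simp: EG_def RG_def CL_def coincidence_set_def values_at_def)

lemma realises_coincidences_if_KG:
  assumes K: "KG G \<subseteq> {CL E | E. E \<in> CL UNIV}"
  shows "realises_coincidences G"
  unfolding realises_coincidences_def
proof
  fix f assume f: "f \<in> Creal"
  then have "EG G {f} \<in> KG G" by (auto simp: KG_def)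
  with K obtain E where E: "EG G {f} = CL E" and "closed E" by (auto simp: CL_def)
  then have "E \<in> EG G {f}" by (simp add: CL_def)
  then obtain g where g: "g \<in> G" "\<forall>x\<in>E. f x = g x" by (auto simp: EG_def RG_def)
  have "E = coincidence_set G f"
  proof
    show "E \<subseteq> coincidence_set G f"
      using g by (auto simp: coincidence_set_def values_at_def)
    show "coincidence_set G f \<subseteq> E"
    proof
      fix x assume "x \<in> coincidence_set G f"
      then have "{x} \<in> CL E" using singleton_in_EG_iff[OF f] E by blast
      then show "x \<in> E" by (simp add: CL_def)
    qed
  qed
  with \<open>closed E\<close> g show "closed (coincidence_set G f) \<and> (\<exists>g\<in>G. \<forall>x\<in>coincidence_set G f. f x = g x)"
    by blast
qed

lemma closed_level_set:
  assumes "realises_coincidences G"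
  shows "closed {x. c \<in> values_at G x}"
proof -
  have "(\<lambda>_. c) \<in> Creal" by (simp add: Creal_def)
  with assms show ?thesis by (auto simp: realises_coincidences_def coincidence_set_def)
qed

text \<open>If \<open>c\<close> were not a value at \<open>x\<close>, it would not be one on a ball around \<open>x\<close>; but the member
  of \<open>G\<close> realising a splice of \<open>g1\<close> into \<open>g2\<close> across that ball must cross level \<open>c\<close> inside it.\<close>

lemma values_at_intermediate:
  assumes GC: "G \<subseteq> Creal" and R: "realises_coincidences G"
    and a: "a \<in> values_at G x" and b: "b \<in> values_at G x" and "a < c" "c < b"
  shows "c \<in> values_at G x"
proof (rule ccontr)
  assume c: "c \<notin> values_at G x"
  obtain g1 g2 where g1: "g1 \<in> G" "g1 x = a" and g2: "g2 \<in> G" "g2 x = b"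
    using a b by (auto simp: values_at_def)
  have cont: "continuous_on UNIV g1" "continuous_on UNIV g2"
    using g1 g2 GC by (auto simp: Creal_def)
  let ?U = "- {y. c \<in> values_at G y} \<inter> {y. g1 y < c} \<inter> {y. c < g2 y}"
  have "open ?U"
    using closed_level_set[OF R] cont by (intro open_Int open_Collect_less continuous_intros) auto
  moreover have "x \<in> ?U" using c g1 g2 \<open>a < c\<close> \<open>c < b\<close> by simp
  ultimately obtain e where "e > 0" and U: "ball x e \<subseteq> ?U"
    using open_contains_ball_eq by blast
  define u v where "u = x - e / 2" and "v = x + e / 2"
  have "u < v" "u \<in> ball x e" "v \<in> ball x e" "{u..v} \<subseteq> ball x e"
    using \<open>e > 0\<close> by (auto simp: u_def v_def dist_real_def)
  define f where "f y = g1 y + (y - u) / (v - u) * (g2 y - g1 y)" for y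
  have "f \<in> Creal"
    using \<open>u < v\<close> unfolding Creal_def f_def by (auto intro!: continuous_intros cont)
  with R obtain g where g: "g \<in> G" "\<forall>y\<in>coincidence_set G f. f y = g y"
    by (auto simp: realises_coincidences_def)
  have "f u = g1 u" "f v = g2 v" using \<open>u < v\<close> by (simp_all add: f_def)
  then have "u \<in> coincidence_set G f" "v \<in> coincidence_set G f"
    using g1 g2 by (auto simp: coincidence_set_def values_at_def)
  with g \<open>f u = g1 u\<close> \<open>f v = g2 v\<close> have "g u = g1 u" "g v = g2 v" by auto
  moreover have "g1 u < c" "c < g2 v" using U \<open>u \<in> ball x e\<close> \<open>v \<in> ball x e\<close> by auto
  moreover have "continuous_on {u..v} g"
    using g GC by (auto simp: Creal_def intro: continuous_on_subset)
  ultimately obtain z where "z \<in> {u..v}" "g z = c"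
    using IVT'[of g u c v] \<open>u < v\<close> by force
  with g have "z \<in> ball x e" "c \<in> values_at G z"
    using \<open>{u..v} \<subseteq> ball x e\<close> by (auto simp: values_at_def)
  with U show False by auto
qed

lemma upper_env_ge: "g \<in> G \<Longrightarrow> ereal (g x) \<le> upper_env G x"
  unfolding upper_env_def by (rule SUP_upper)

lemma lower_env_le: "g \<in> G \<Longrightarrow> lower_env G x \<le> ereal (g x)"
  unfolding lower_env_def by (rule INF_lower)

lemma values_at_below_upper_env:
  assumes GC: "G \<subseteq> Creal" and R: "realises_coincidences G"
    and "g0 \<in> G" "g0 x < c" "ereal c < upper_env G x"
  shows "c \<in> values_at G x"
proof -
  obtain g where "g \<in> G" "c < g x"
    using assms(5) unfolding upper_env_def less_SUP_iff by auto
  with assms(3,4) show ?thesis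
    using values_at_intermediate[OF GC R, of "g0 x" x "g x" c] by (auto simp: values_at_def)
qed

lemma continuous_upper_env:
  assumes GC: "G \<subseteq> Creal" and "G \<noteq> {}" and R: "realises_coincidences G"
  shows "continuous_on UNIV (upper_env G)"
  unfolding continuous_on_def
proof (intro ballI order_tendstoI)
  fix x a assume "a < upper_env G x"
  then obtain g where g: "g \<in> G" "a < ereal (g x)"
    unfolding upper_env_def less_SUP_iff by blast
  have "((\<lambda>y. ereal (g y)) \<longlongrightarrow> ereal (g x)) (at x within UNIV)"
    using g(1) GC unfolding Creal_def continuous_on_def by (blast intro: tendsto_ereal)
  then have "\<forall>\<^sub>F y in at x within UNIV. a < ereal (g y)"
    using g(2) order_tendstoD(1) by blast
  then show "\<forall>\<^sub>F y in at x within UNIV. a < upper_env G y"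
    by eventually_elim (meson upper_env_ge g(1) less_le_trans)
next
  fix x b assume "upper_env G x < b"
  then obtain t where t: "upper_env G x < ereal t" "ereal t < b"
    using ereal_dense2 by blast
  obtain g0 where g0: "g0 \<in> G" using \<open>G \<noteq> {}\<close> by blast
  have "ereal (g0 x) < ereal t" using upper_env_ge[OF g0, of x] t(1) by (rule le_less_trans)
  then have "g0 x < t" by simp
  moreover have "t \<notin> values_at G x"
    using upper_env_ge[of _ G x] t(1) by (force simp: values_at_def)
  moreover have "open ({y. g0 y < t} \<inter> - {y. t \<in> values_at G y})"
    using closed_level_set[OF R] g0 GC
    by (intro open_Int open_Compl open_Collect_less continuous_intros) (auto simp: Creal_def)
  ultimately have "\<forall>\<^sub>F y in at x. g0 y < t \<and> t \<notin> values_at G y"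
    using eventually_at_in_open' by fastforce
  then show "\<forall>\<^sub>F y in at x within UNIV. upper_env G y < b"
  proof eventually_elim
    case (elim y)
    then have "upper_env G y \<le> ereal t"
      using values_at_below_upper_env[OF GC R g0, of y t] by force
    with t(2) show ?case by simp
  qed
qed

text \<open>If some value of \<open>G\<close> at \<open>x\<close> lies below \<open>c\<close>, the peak \<open>f\<close> below the envelope with \<open>f x = c\<close>
  takes values of \<open>G\<close> at all points near \<open>x\<close>; closedness of the coincidence set then reaches \<open>x\<close>.\<close>

lemma upper_env_attained:
  assumes GC: "G \<subseteq> Creal" and "G \<noteq> {}" and R: "realises_coincidences G"
    and c: "upper_env G x = ereal c"
  shows "c \<in> values_at G x"
proof (cases "\<exists>g\<in>G. g x < c")
  case False
  obtain g0 where "g0 \<in> G" using \<open>G \<noteq> {}\<close> by blast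
  moreover from this have "g0 x = c" using False upper_env_ge[of g0 G x] c by force
  ultimately show ?thesis by (auto simp: values_at_def)
next
  case True
  then obtain g0 where g0: "g0 \<in> G" "g0 x < c" by blast
  define m where "m y = min (upper_env G y) (ereal c)" for y
  define f where "f y = min c (real_of_ereal (m y) - \<bar>y - x\<bar>)" for y
  have m_bounds: "ereal (min (g0 y) c) \<le> m y" "m y \<le> ereal c" for y
    unfolding m_def ereal_min by (auto intro: min.coboundedI1 upper_env_ge[OF g0(1)])
  have m_real: "ereal (real_of_ereal (m y)) = m y" for y
    using m_bounds by (intro ereal_real' abs_ereal_between_neq_infinity)
  have "continuous_on UNIV m"
    unfolding m_def by (intro continuous_intros continuous_upper_env GC \<open>G \<noteq> {}\<close> R)
  then have "continuous_on UNIV (\<lambda>y. real_of_ereal (m y))"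
    using m_bounds by (rule continuous_on_real_of_ereal_between)
  then have f: "f \<in> Creal" unfolding Creal_def f_def mem_Collect_eq by (intro continuous_intros)
  have "f x = c" using c by (simp add: f_def m_def)
  have "open {y. g0 y < f y}"
    using f g0 GC by (intro open_Collect_less) (auto simp: Creal_def)
  then have "\<forall>\<^sub>F y in at x. y \<in> {y. g0 y < f y} - {x}"
    using eventually_at_in_open g0(2) \<open>f x = c\<close> by fastforce
  then have "\<forall>\<^sub>F y in at x. y \<in> coincidence_set G f"
  proof eventually_elim
    case (elim y)
    then have "f y < real_of_ereal (m y)" by (auto simp: f_def)
    then have "ereal (f y) < ereal (real_of_ereal (m y))" by simp
    also have "\<dots> = m y" by (rule m_real)
    also have "\<dots> \<le> upper_env G y" by (simp add: m_def)
    finally have "ereal (f y) < upper_env G y" .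
    with elim show ?case
      using values_at_below_upper_env[OF GC R g0(1)] by (auto simp: coincidence_set_def)
  qed
  moreover have "closed (coincidence_set G f)"
    using R f by (simp add: realises_coincidences_def)
  ultimately have "x \<in> coincidence_set G f"
    using Lim_in_closed_set[of _ "\<lambda>y. y" "at x" x] by (auto intro: tendsto_ident_at)
  with \<open>f x = c\<close> show ?thesis by (simp add: coincidence_set_def)
qed

definition reflect :: "(real \<Rightarrow> real) set \<Rightarrow> (real \<Rightarrow> real) set" where
  "reflect G = (\<lambda>g x. - g x) ` G"

lemma values_at_reflect: "c \<in> values_at (reflect G) x \<longleftrightarrow> - c \<in> values_at G x"
proof -
  have "values_at (reflect G) x = uminus ` values_at G x"
    unfolding values_at_def reflect_def by (simp add: image_image)
  then show ?thesis by force
qed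

lemma coincidence_set_reflect: "coincidence_set (reflect G) f = coincidence_set G (\<lambda>x. - f x)"
  by (simp add: coincidence_set_def values_at_reflect)

lemma reflect_subset_Creal: "G \<subseteq> Creal \<Longrightarrow> reflect G \<subseteq> Creal"
  using uminus_in_Creal by (auto simp: reflect_def)

lemma realises_coincidences_reflect:
  assumes "realises_coincidences G"
  shows "realises_coincidences (reflect G)"
  unfolding realises_coincidences_def
proof
  fix f assume "f \<in> Creal"
  then obtain g where closed: "closed (coincidence_set G (\<lambda>x. - f x))" and g: "g \<in> G"
    and agree: "\<forall>x\<in>coincidence_set G (\<lambda>x. - f x). - f x = g x"
    using assms uminus_in_Creal unfolding realises_coincidences_def by blast
  have "(\<lambda>x. - g x) \<in> reflect G" using g by (simp add: reflect_def)
  moreover have "\<forall>x\<in>coincidence_set (reflect G) f. f x = - g x"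
    using agree unfolding coincidence_set_reflect by force
  ultimately show "closed (coincidence_set (reflect G) f) \<and>
      (\<exists>g\<in>reflect G. \<forall>x\<in>coincidence_set (reflect G) f. f x = g x)"
    using closed unfolding coincidence_set_reflect by (intro conjI bexI[where x = "\<lambda>x. - g x"])
qed

lemma upper_env_reflect: "upper_env (reflect G) x = - lower_env G x"
proof -
  have "upper_env (reflect G) x = (SUP g\<in>G. - ereal (g x))"
    by (simp add: upper_env_def reflect_def image_image)
  also have "\<dots> = - lower_env G x"
    by (simp only: ereal_SUP_uminus_eq lower_env_def)
  finally show ?thesis .
qed

lemma continuous_lower_env:
  assumes "G \<subseteq> Creal" and "G \<noteq> {}" and "realises_coincidences G"
  shows "continuous_on UNIV (lower_env G)"
proof -
  have "continuous_on UNIV (upper_env (reflect G))"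
    using assms by (intro continuous_upper_env reflect_subset_Creal realises_coincidences_reflect)
      (auto simp: reflect_def)
  then have "continuous_on UNIV (\<lambda>x. - upper_env (reflect G) x)"
    by (rule continuous_on_compose2[OF continuous_uminus_ereal]) auto
  then show ?thesis by (simp add: upper_env_reflect)
qed

lemma lower_env_attained:
  assumes "G \<subseteq> Creal" and "G \<noteq> {}" and "realises_coincidences G"
    and "lower_env G x = ereal c"
  shows "c \<in> values_at G x"
proof -
  have "upper_env (reflect G) x = ereal (- c)"
    using assms(4) by (simp add: upper_env_reflect)
  then have "- c \<in> values_at (reflect G) x"
    using assms(1-3) by (intro upper_env_attained reflect_subset_Creal realises_coincidences_reflect)
      (auto simp: reflect_def)
  then show ?thesis by (simp add: values_at_reflect)
qed

lemma values_at_between_envelopes: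
  assumes GC: "G \<subseteq> Creal" and ne: "G \<noteq> {}" and R: "realises_coincidences G"
    and "lower_env G x \<le> ereal c" "ereal c \<le> upper_env G x"
  shows "c \<in> values_at G x"
proof (cases "lower_env G x = ereal c \<or> upper_env G x = ereal c")
  case True
  then show ?thesis using lower_env_attained[OF GC ne R] upper_env_attained[OF GC ne R] by blast
next
  case False
  with assms(4,5) have "lower_env G x < ereal c" "ereal c < upper_env G x" by auto
  moreover from this(1) obtain g0 where "g0 \<in> G" "g0 x < c"
    unfolding lower_env_def INF_less_iff by auto
  ultimately show ?thesis using values_at_below_upper_env[OF GC R] by blast
qed

lemma realises_coincidences_imp_eq_band:
  assumes GC: "G \<subseteq> Creal" and ne: "G \<noteq> {}" and R: "realises_coincidences G"
  shows "G = band (lower_env G) (upper_env G)"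
proof
  show "G \<subseteq> band (lower_env G) (upper_env G)"
    using GC lower_env_le upper_env_ge by (auto simp: band_def)
  show "band (lower_env G) (upper_env G) \<subseteq> G"
  proof
    fix f assume "f \<in> band (lower_env G) (upper_env G)"
    then have "f \<in> Creal" and "coincidence_set G f = UNIV"
      using values_at_between_envelopes[OF GC ne R] by (auto simp: band_def coincidence_set_def)
    then obtain g where "g \<in> G" "\<forall>x. f x = g x"
      using R by (auto simp: realises_coincidences_def)
    then show "f \<in> G" by (metis ext)
  qed
qed

subsection \<open>Bands satisfy condition (1)\<close>

text \<open>The clamped function is real-valued because it lies between \<open>g0\<close> and \<open>f\<close>.\<close>

lemma band_clamp:
  assumes h1: "continuous_on UNIV h1" and h2: "continuous_on UNIV h2"
    and g0: "g0 \<in> band h1 h2" and f: "f \<in> Creal"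
  shows "\<exists>g\<in>band h1 h2. \<forall>x. h1 x \<le> ereal (f x) \<and> ereal (f x) \<le> h2 x \<longrightarrow> g x = f x"
proof -
  define e where "e x = max (h1 x) (min (h2 x) (ereal (f x)))" for x
  have g0_bounds: "h1 x \<le> ereal (g0 x)" "ereal (g0 x) \<le> h2 x" for x
    using g0 by (auto simp: band_def)
  have e_bounds: "ereal (min (g0 x) (f x)) \<le> e x" "e x \<le> ereal (max (g0 x) (f x))" for x
  proof -
    have "min (ereal (g0 x)) (ereal (f x)) \<le> min (h2 x) (ereal (f x))"
      by (rule min.mono[OF g0_bounds(2) order_refl])
    then show "ereal (min (g0 x) (f x)) \<le> e x"
      unfolding e_def ereal_min by (rule max.coboundedI2)
    have "e x \<le> max (ereal (g0 x)) (min (h2 x) (ereal (f x)))"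
      unfolding e_def by (rule max.mono[OF g0_bounds(1) order_refl])
    also have "\<dots> \<le> ereal (max (g0 x) (f x))"
      unfolding ereal_max by (rule max.mono[OF order_refl min.cobounded2])
    finally show "e x \<le> ereal (max (g0 x) (f x))" .
  qed
  have "continuous_on UNIV e"
    using f unfolding e_def Creal_def by (intro continuous_intros continuous_on_ereal h1 h2) auto
  then have "continuous_on UNIV (\<lambda>x. real_of_ereal (e x))"
    using e_bounds by (rule continuous_on_real_of_ereal_between)
  moreover have "ereal (real_of_ereal (e x)) = e x" for x
    using e_bounds by (intro ereal_real' abs_ereal_between_neq_infinity)
  moreover have "h1 x \<le> e x" "e x \<le> h2 x" for x
    using order_trans[OF g0_bounds[of x]] unfolding e_def by (auto intro: max.boundedI)
  moreover have "e x = ereal (f x)" if "h1 x \<le> ereal (f x)" "ereal (f x) \<le> h2 x" for x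
    using that by (simp add: e_def)
  ultimately show ?thesis
    by (intro bexI[where x = "\<lambda>x. real_of_ereal (e x)"]) (simp_all add: band_def Creal_def)
qed

lemma closed_band_points:
  assumes h1: "continuous_on UNIV h1" and h2: "continuous_on UNIV h2" and "F \<subseteq> Creal"
  shows "closed {x. \<forall>f\<in>F. h1 x \<le> ereal (f x) \<and> ereal (f x) \<le> h2 x}"
proof -
  have "{x. \<forall>f\<in>F. h1 x \<le> ereal (f x) \<and> ereal (f x) \<le> h2 x} =
      (\<Inter>f\<in>F. {x. h1 x \<le> ereal (f x)} \<inter> {x. ereal (f x) \<le> h2 x})"
    by auto
  also have "closed \<dots>"
    using \<open>F \<subseteq> Creal\<close>
    by (intro closed_INT ballI closed_Int closed_Collect_le h1 h2 continuous_on_ereal)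
      (auto simp: Creal_def)
  finally show ?thesis .
qed

lemma EG_band:
  assumes h1: "continuous_on UNIV h1" and h2: "continuous_on UNIV h2"
    and g0: "g0 \<in> band h1 h2" and F: "F \<subseteq> Creal"
  shows "EG (band h1 h2) F = CL {x. \<forall>f\<in>F. h1 x \<le> ereal (f x) \<and> ereal (f x) \<le> h2 x}"
    (is "_ = CL ?A")
proof (intro equalityI subsetI)
  fix E assume "E \<in> EG (band h1 h2) F"
  then have "closed E" and agree: "\<forall>f\<in>F. \<exists>g\<in>band h1 h2. \<forall>x\<in>E. f x = g x"
    by (auto simp: EG_def RG_def CL_def)
  have "E \<subseteq> ?A"
  proof (intro subsetI CollectI ballI)
    fix x f assume "x \<in> E" "f \<in> F"
    with agree obtain g where "g \<in> band h1 h2" "f x = g x" by blast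
    then show "h1 x \<le> ereal (f x) \<and> ereal (f x) \<le> h2 x" by (simp add: band_def)
  qed
  with \<open>closed E\<close> show "E \<in> CL ?A" by (simp add: CL_def)
next
  fix E assume "E \<in> CL ?A"
  then have "closed E" and E: "E \<subseteq> ?A" by (simp_all add: CL_def)
  have "(f, E) \<in> RG (band h1 h2)" if "f \<in> F" for f
  proof -
    have "f \<in> Creal" using F that by (rule subsetD)
    then obtain g where g: "g \<in> band h1 h2"
      and clamp: "\<forall>x. h1 x \<le> ereal (f x) \<and> ereal (f x) \<le> h2 x \<longrightarrow> g x = f x"
      using band_clamp[OF h1 h2 g0] by blast
    have "\<forall>x\<in>E. f x = g x" using E that clamp by fastforce
    with g \<open>f \<in> Creal\<close> \<open>closed E\<close> show ?thesis by (auto simp: RG_def CL_def)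
  qed
  with \<open>closed E\<close> show "E \<in> EG (band h1 h2) F" by (simp add: EG_def CL_def)
qed

lemma KG_band:
  assumes "continuous_on UNIV h1" and "continuous_on UNIV h2" and "band h1 h2 \<noteq> {}"
  shows "KG (band h1 h2) \<subseteq> {CL E | E. E \<in> CL UNIV}"
proof
  fix K assume "K \<in> KG (band h1 h2)"
  then obtain F where F: "F \<subseteq> Creal" and K: "K = EG (band h1 h2) F" by (auto simp: KG_def)
  obtain g0 where "g0 \<in> band h1 h2" using assms(3) by blast
  let ?A = "{x. \<forall>f\<in>F. h1 x \<le> ereal (f x) \<and> ereal (f x) \<le> h2 x}"
  have "K = CL ?A" unfolding K using EG_band[OF assms(1,2) \<open>g0 \<in> band h1 h2\<close> F] .
  moreover have "?A \<in> CL UNIV" using closed_band_points[OF assms(1,2) F] by (simp add: CL_def)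
  ultimately show "K \<in> {CL E | E. E \<in> CL UNIV}" by blast
qed

theorem theorem3p3:
  fixes G :: "(real \<Rightarrow> real) set"
  assumes "G \<subseteq> Creal" and "G \<noteq> {}"
  shows "KG G \<subseteq> {CL E | E. E \<in> CL UNIV} \<longleftrightarrow>
    (\<exists>h1 h2 :: real \<Rightarrow> ereal. continuous_on UNIV h1 \<and> continuous_on UNIV h2 \<and>
       G = {g \<in> Creal. (\<forall>x. h1 x \<le> ereal (g x)) \<and> (\<forall>x. ereal (g x) \<le> h2 x)})"
proof
  assume "KG G \<subseteq> {CL E | E. E \<in> CL UNIV}"
  then have R: "realises_coincidences G" by (rule realises_coincidences_if_KG)
  show "\<exists>h1 h2 :: real \<Rightarrow> ereal. continuous_on UNIV h1 \<and> continuous_on UNIV h2 \<and>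
       G = {g \<in> Creal. (\<forall>x. h1 x \<le> ereal (g x)) \<and> (\<forall>x. ereal (g x) \<le> h2 x)}"
  proof (intro exI conjI)
    show "continuous_on UNIV (lower_env G)" using assms R by (rule continuous_lower_env)
    show "continuous_on UNIV (upper_env G)" using assms R by (rule continuous_upper_env)
    show "G = {g \<in> Creal. (\<forall>x. lower_env G x \<le> ereal (g x)) \<and> (\<forall>x. ereal (g x) \<le> upper_env G x)}"
      using realises_coincidences_imp_eq_band[OF assms R] unfolding band_def .
  qed
next
  assume "\<exists>h1 h2 :: real \<Rightarrow> ereal. continuous_on UNIV h1 \<and> continuous_on UNIV h2 \<and>
       G = {g \<in> Creal. (\<forall>x. h1 x \<le> ereal (g x)) \<and> (\<forall>x. ereal (g x) \<le> h2 x)}"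
  then obtain h1 h2 :: "real \<Rightarrow> ereal" where h1: "continuous_on UNIV h1"
    and h2: "continuous_on UNIV h2"
    and "G = {g \<in> Creal. (\<forall>x. h1 x \<le> ereal (g x)) \<and> (\<forall>x. ereal (g x) \<le> h2 x)}"
    by blast
  from this(3) have G: "G = band h1 h2" unfolding band_def .
  with assms(2) show "KG G \<subseteq> {CL E | E. E \<in> CL UNIV}"
    using KG_band[OF h1 h2] by simp
qed

end
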